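(* Let $X$ be a subspace of $\beta\omega$ with $\omega\subseteq X$. If $\operatorname{CL}(X)$ is pseudocompact, then for every cardinal $\kappa<\mathfrak h$, $\omega^\kappa$ is relatively countably compact in $X^\kappa$; consequently $X$ is $(\kappa,\omega^* )$-pseudocompact.
   Context: $\beta\omega$ is the Stone–Čech compactification of the discrete space $\omega$, $\omega^*$ its set of free ultrafilters. $\mathfrak h$ is the least cardinality of a family of open dense subsets of $([\omega]^\omega,\subseteq^* )$ with empty intersection (a family $\mathcal D\subseteq[\omega]^\omega$ is open dense if every $A\in[\omega]^\omega$ contains some $B\in\mathcal D$, and $\mathcal D$ is closed under infinite $\subseteq^*$-subsets). A subset $Y$ of $Z$ is relatively countably compact in $Z$ if every countably infinite subset of $Y$ has an accumulation point in $Z$. For $p\in\omega^*$ and sets $B_n\subseteq X$, $x$ is a $p$-limit of $(B_n)$ if $\{n:V\cap B_n\ne\emptyset\}\in p$ for each neighborhood $V$ of $x$; $X$ is $(\kappa,\omega^* )$-pseudocompact if for every family of $\kappa$ sequences of nonempty open subsets of $X$ there is a single $p\in\omega^*$ such that each sequence has a $p$-limit point in $X$. $\operatorname{CL}(X)$ is the set of nonempty closed subsets of $X$ with the Vietoris topology; pseudocompact means every continuous real-valued function is bounded. *)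

theory Defs
  imports "HOL-Analysis.Analysis"
begin

text \<open>Points of beta-omega are ultrafilters on nat, represented as sets of subsets of nat.\<close>

definition is_ultrafilter :: "nat set set \<Rightarrow> bool" where
  "is_ultrafilter U \<longleftrightarrow>
     UNIV \<in> U \<and> {} \<notin> U \<and>
     (\<forall>A B. A \<in> U \<and> A \<subseteq> B \<longrightarrow> B \<in> U) \<and>
     (\<forall>A B. A \<in> U \<and> B \<in> U \<longrightarrow> A \<inter> B \<in> U) \<and>
     (\<forall>A. A \<in> U \<or> - A \<in> U)"

definition betaw :: "nat set set set" where
  "betaw = {U. is_ultrafilter U}"

text \<open>The principal_uf ultrafilter at n; omega is identified with these points.\<close>
definition principal_uf :: "nat \<Rightarrow> nat set set" where
  "principal_uf n = {A. n \<in> A}"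

definition omega_star :: "nat set set set" where
  "omega_star = {U \<in> betaw. \<forall>n. U \<noteq> principal_uf n}"

definition betaw_top :: "nat set set topology" where
  "betaw_top = topology_generated_by {{U \<in> betaw. A \<in> U} | A. True}"

definition CL :: "'a topology \<Rightarrow> 'a set set" where
  "CL T = {F. closedin T F \<and> F \<noteq> {}}"

definition vietoris :: "'a topology \<Rightarrow> 'a set topology" where
  "vietoris T = topology_generated_by
     ({{F \<in> CL T. F \<subseteq> U} | U. openin T U} \<union> {{F \<in> CL T. F \<inter> U \<noteq> {}} | U. openin T U})"

definition pseudocompact :: "'a topology \<Rightarrow> bool" where
  "pseudocompact T \<longleftrightarrow> (\<forall>f. continuous_map T euclideanreal f \<longrightarrow> bounded (f ` topspace T))"

text \<open>Open dense subfamilies of ([omega]^omega, almost-inclusion).\<close>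
definition open_dense :: "nat set set \<Rightarrow> bool" where
  "open_dense D \<longleftrightarrow>
     (\<forall>B\<in>D. infinite B) \<and>
     (\<forall>A. infinite A \<longrightarrow> (\<exists>B\<in>D. B \<subseteq> A)) \<and>
     (\<forall>B C. B \<in> D \<and> infinite C \<and> finite (C - B) \<longrightarrow> C \<in> D)"

text \<open>|K| < h: every family of at most |K| open dense families has an infinite
  set in common (h is the least size of a family with empty intersection).\<close>
definition less_than_h :: "'k set \<Rightarrow> bool" where
  "less_than_h K \<longleftrightarrow>
     (\<forall>\<D> :: nat set set set. (card_of \<D>, card_of K) \<in> ordLeq \<and> (\<forall>D\<in>\<D>. open_dense D)
        \<longrightarrow> (\<exists>A. infinite A \<and> (\<forall>D\<in>\<D>. A \<in> D)))"

definition rel_countably_compact :: "'a topology \<Rightarrow> 'a set \<Rightarrow> bool" where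
  "rel_countably_compact T Y \<longleftrightarrow>
     Y \<subseteq> topspace T \<and>
     (\<forall>S. S \<subseteq> Y \<and> infinite S \<and> countable S \<longrightarrow> T derived_set_of S \<noteq> {})"

definition p_limit :: "'a topology \<Rightarrow> nat set set \<Rightarrow> (nat \<Rightarrow> 'a set) \<Rightarrow> 'a \<Rightarrow> bool" where
  "p_limit T p B x \<longleftrightarrow> x \<in> topspace T \<and>
     (\<forall>V. openin T V \<and> x \<in> V \<longrightarrow> {n. V \<inter> B n \<noteq> {}} \<in> p)"

definition kappa_omega_star_pseudocompact :: "'k set \<Rightarrow> 'a topology \<Rightarrow> bool" where
  "kappa_omega_star_pseudocompact K T \<longleftrightarrow>
     (\<forall>U :: 'k \<Rightarrow> nat \<Rightarrow> 'a set.
        (\<forall>k\<in>K. \<forall>n. openin T (U k n) \<and> U k n \<noteq> {}) \<longrightarrow>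
        (\<exists>p\<in>omega_star. \<forall>k\<in>K. \<exists>x. p_limit T p (U k) x))"

end

theory Submission
  imports Defs
begin

text \<open>
  Points of \<omega> are isolated in X, so every sequence of pairwise disjoint nonempty finite
  subsets F j of \<omega> is a sequence of distinct isolated points of CL(X); by pseudocompactness it
  accumulates at some G in CL(X). A free ultrafilter p refining the traces of the neighbourhoods
  of G then maps every selection of the F j into a point of G, hence of X.

  Given fewer than h maps f k from \<omega> to \<omega>, there is one infinite A on which every f k is
  either almost constant or interlaced, i.e. eventually sends each element of A between its
  neighbours in A. Cutting A into consecutive blocks around its even-indexed elements a (2 j),
  the sequences j \<mapsto> f k (a (2 j)) become almost selections of the blocks, so with P the image
  of p under j \<mapsto> a (2 j) all the P-limits of the f k lie in X. This single P yields an
  accumulation point for every countable subset of \<omega>^\<kappa> and, by density of \<omega>, common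
  P-limits for \<kappa> sequences of open sets.
\<close>

lemma ultrafilter_UNIV: "is_ultrafilter U \<Longrightarrow> UNIV \<in> U"
  by (simp add: is_ultrafilter_def)

lemma ultrafilter_empty: "is_ultrafilter U \<Longrightarrow> {} \<notin> U"
  by (simp add: is_ultrafilter_def)

lemma ultrafilter_mono: "is_ultrafilter U \<Longrightarrow> A \<in> U \<Longrightarrow> A \<subseteq> B \<Longrightarrow> B \<in> U"
  unfolding is_ultrafilter_def by blast

lemma ultrafilter_Int: "is_ultrafilter U \<Longrightarrow> A \<in> U \<Longrightarrow> B \<in> U \<Longrightarrow> A \<inter> B \<in> U"
  unfolding is_ultrafilter_def by blast

lemma ultrafilter_Compl_iff: "is_ultrafilter U \<Longrightarrow> - A \<in> U \<longleftrightarrow> A \<notin> U"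
  unfolding is_ultrafilter_def by (metis Compl_disjoint)

lemma ultrafilter_INT:
  assumes "is_ultrafilter U" "finite J" "\<And>i. i \<in> J \<Longrightarrow> A i \<in> U"
  shows "(\<Inter>i\<in>J. A i) \<in> U"
  using assms(2,3)
  by (induction J rule: finite_induct) (auto simp: ultrafilter_UNIV ultrafilter_Int assms(1))

lemma ultrafilter_eqI:
  assumes "is_ultrafilter U" "is_ultrafilter V" "U \<subseteq> V"
  shows "U = V"
  using assms ultrafilter_Compl_iff by blast

lemma ultrafilter_principal: "is_ultrafilter (principal_uf n)"
  unfolding is_ultrafilter_def principal_uf_def by auto

lemma principal_uf_in_betaw: "principal_uf n \<in> betaw"
  by (simp add: betaw_def ultrafilter_principal)

lemma principal_uf_inject: "principal_uf a = principal_uf b \<longleftrightarrow> a = b"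
  unfolding principal_uf_def by (metis insertI1 mem_Collect_eq singletonD)

lemma ultrafilter_finite_principal:
  assumes U: "is_ultrafilter U" and "finite E" "E \<in> U"
  shows "\<exists>a\<in>E. U = principal_uf a"
  using assms(2,3)
proof (induction E rule: finite_induct)
  case empty
  then show ?case using ultrafilter_empty[OF U] by simp
next
  case (insert a E)
  show ?case
  proof (cases "{a} \<in> U")
    case True
    then have "principal_uf a \<subseteq> U"
      using ultrafilter_mono[OF U] by (auto simp: principal_uf_def)
    then show ?thesis using ultrafilter_eqI[OF ultrafilter_principal U] by blast
  next
    case False
    then have "insert a E \<inter> - {a} \<in> U"
      using insert.prems ultrafilter_Compl_iff[OF U] ultrafilter_Int[OF U] by blast
    then have "E \<in> U" using ultrafilter_mono[OF U] by blast
    then show ?thesis using insert.IH by blast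
  qed
qed

lemma omega_star_iff: "U \<in> omega_star \<longleftrightarrow> is_ultrafilter U \<and> (\<forall>n. U \<noteq> principal_uf n)"
  by (simp add: omega_star_def betaw_def)

lemma omega_star_ultrafilter: "U \<in> omega_star \<Longrightarrow> is_ultrafilter U"
  by (simp add: omega_star_iff)

lemma omega_star_infinite: "U \<in> omega_star \<Longrightarrow> A \<in> U \<Longrightarrow> infinite A"
  using ultrafilter_finite_principal by (fastforce simp: omega_star_iff)

lemma omega_star_cofinite: "U \<in> omega_star \<Longrightarrow> finite E \<Longrightarrow> - E \<in> U"
  using omega_star_infinite ultrafilter_Compl_iff omega_star_ultrafilter by blast

definition ufmap :: "('a \<Rightarrow> 'b) \<Rightarrow> 'a set set \<Rightarrow> 'b set set" where
  "ufmap g P = {C. g -` C \<in> P}"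

lemma ultrafilter_ufmap: "is_ultrafilter P \<Longrightarrow> is_ultrafilter (ufmap g P)"
  unfolding is_ultrafilter_def ufmap_def by (auto simp: vimage_Compl) (meson vimage_mono)

lemma ufmap_comp: "ufmap (f \<circ> g) P = ufmap f (ufmap g P)"
  by (simp add: ufmap_def vimage_comp)

lemma ufmap_cong:
  assumes P: "is_ultrafilter P" and "{j. f j = g j} \<in> P"
  shows "ufmap f P = ufmap g P"
proof -
  have "f -` C \<in> P \<longleftrightarrow> g -` C \<in> P" for C
  proof -
    have "f -` C \<inter> {j. f j = g j} = g -` C \<inter> {j. f j = g j}" by auto
    then show ?thesis using assms ultrafilter_Int[OF P] ultrafilter_mono[OF P] by (metis inf_le1)
  qed
  then show ?thesis by (simp add: ufmap_def)
qed

lemma ufmap_omega_star: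
  assumes P: "P \<in> omega_star" and "inj g"
  shows "ufmap g P \<in> omega_star"
proof -
  have "ufmap g P \<noteq> principal_uf n" for n
  proof
    assume "ufmap g P = principal_uf n"
    then have "g -` {n} \<in> P" by (auto simp: ufmap_def principal_uf_def)
    moreover have "finite (g -` {n})" using \<open>inj g\<close> by (simp add: finite_vimageI)
    ultimately show False using omega_star_infinite[OF P] by blast
  qed
  then show ?thesis
    using ultrafilter_ufmap[OF omega_star_ultrafilter[OF P]] by (simp add: omega_star_iff)
qed

lemma ufmap_eventually_const:
  assumes P: "P \<in> omega_star" and "finite {j. f j \<noteq> c}"
  shows "ufmap f P = principal_uf c"
proof -
  have "{j. f j = c} \<in> P"
    using omega_star_cofinite[OF assms] by (simp add: Compl_eq)
  then have "ufmap f P = ufmap (\<lambda>_. c) P"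
    using ufmap_cong[OF omega_star_ultrafilter[OF P], of f "\<lambda>_. c"] by simp
  also have "\<dots> = principal_uf c"
    using omega_star_ultrafilter[OF P]
    by (auto simp: ufmap_def principal_uf_def ultrafilter_UNIV ultrafilter_empty)
  finally show ?thesis .
qed

section \<open>Extending a filter base of infinite sets to a free ultrafilter\<close>

definition infinite_filter :: "nat set set \<Rightarrow> bool" where
  "infinite_filter F \<longleftrightarrow> UNIV \<in> F \<and> (\<forall>A\<in>F. infinite A) \<and>
     (\<forall>A\<in>F. \<forall>B\<in>F. A \<inter> B \<in> F) \<and> (\<forall>A B. A \<in> F \<and> A \<subseteq> B \<longrightarrow> B \<in> F)"

lemma infinite_filter_Union_chain:
  assumes "\<C> \<noteq> {}" "\<And>F. F \<in> \<C> \<Longrightarrow> infinite_filter F"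
    and chain: "\<And>F G. F \<in> \<C> \<Longrightarrow> G \<in> \<C> \<Longrightarrow> F \<subseteq> G \<or> G \<subseteq> F"
  shows "infinite_filter (\<Union>\<C>)"
  unfolding infinite_filter_def
proof (intro conjI ballI allI impI)
  show "UNIV \<in> \<Union>\<C>"
    using assms(1,2) unfolding infinite_filter_def by blast
  show "infinite A" if "A \<in> \<Union>\<C>" for A
    using that assms(2) unfolding infinite_filter_def by blast
  show "B \<in> \<Union>\<C>" if "A \<in> \<Union>\<C> \<and> A \<subseteq> B" for A B
    using that assms(2) unfolding infinite_filter_def by blast
  show "A \<inter> B \<in> \<Union>\<C>" if "A \<in> \<Union>\<C>" "B \<in> \<Union>\<C>" for A B
  proof -
    from that obtain F G where FG: "A \<in> F" "B \<in> G" "F \<in> \<C>" "G \<in> \<C>" by blast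
    then have "A \<inter> B \<in> F \<or> A \<inter> B \<in> G"
      using chain[OF FG(3,4)] assms(2) unfolding infinite_filter_def by blast
    then show ?thesis using FG by blast
  qed
qed

lemma maximal_infinite_filter_absorbs:
  assumes M: "infinite_filter M"
    and max: "\<And>F. infinite_filter F \<Longrightarrow> M \<subseteq> F \<Longrightarrow> F = M"
    and S: "\<forall>F\<in>M. infinite (S \<inter> F)"
  shows "S \<in> M"
proof -
  define M' where "M' = {B. \<exists>F\<in>M. S \<inter> F \<subseteq> B}"
  have "infinite_filter M'"
    unfolding infinite_filter_def
  proof (intro conjI ballI allI impI)
    show "UNIV \<in> M'" unfolding M'_def using M infinite_filter_def by blast
    show "infinite A" if "A \<in> M'" for A
    proof -
      from that obtain F where "F \<in> M" "S \<inter> F \<subseteq> A" unfolding M'_def by blast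
      then show ?thesis using S finite_subset by blast
    qed
    show "A \<inter> B \<in> M'" if "A \<in> M'" "B \<in> M'" for A B
    proof -
      from that obtain F G where "F \<in> M" "G \<in> M" "S \<inter> F \<subseteq> A" "S \<inter> G \<subseteq> B"
        unfolding M'_def by blast
      moreover have "F \<inter> G \<in> M" using M calculation(1,2) unfolding infinite_filter_def by blast
      ultimately show ?thesis unfolding M'_def by blast
    qed
    show "B \<in> M'" if "A \<in> M' \<and> A \<subseteq> B" for A B
      using that unfolding M'_def by blast
  qed
  moreover have "M \<subseteq> M'" unfolding M'_def by blast
  ultimately have "M' = M" by (rule max)
  moreover have "S \<in> M'" using M unfolding M'_def infinite_filter_def by blast
  ultimately show ?thesis by simp
qed

text \<open>If A meets some member of M in a finite set, then -A meets every member of M in an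
  infinite set.\<close>
lemma maximal_infinite_filter_omega_star:
  assumes M: "infinite_filter M"
    and max: "\<And>F. infinite_filter F \<Longrightarrow> M \<subseteq> F \<Longrightarrow> F = M"
  shows "M \<in> omega_star"
proof -
  note absorb = maximal_infinite_filter_absorbs[OF M max]
  have "A \<in> M \<or> - A \<in> M" for A
  proof (cases "\<forall>F\<in>M. infinite (A \<inter> F)")
    case False
    then obtain F0 where F0: "F0 \<in> M" "finite (A \<inter> F0)" by blast
    have "infinite (- A \<inter> F)" if "F \<in> M" for F
    proof
      assume "finite (- A \<inter> F)"
      then have "finite (F \<inter> F0)"
        using F0(2) by (rule finite_subset[rotated, OF finite_UnI]) blast
      moreover have "F \<inter> F0 \<in> M" using M that F0(1) unfolding infinite_filter_def by blast
      ultimately show False using M unfolding infinite_filter_def by blast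
    qed
    then show ?thesis using absorb by blast
  qed (use absorb in blast)
  then have "is_ultrafilter M"
    using M unfolding infinite_filter_def is_ultrafilter_def by blast
  moreover have "{n} \<in> principal_uf n" "{n} \<notin> M" for n
    using M unfolding infinite_filter_def principal_uf_def by auto
  ultimately show ?thesis unfolding omega_star_iff by blast
qed

lemma omega_star_extends:
  assumes "\<B> \<noteq> {}" "\<And>B. B \<in> \<B> \<Longrightarrow> infinite B" "\<And>B C. B \<in> \<B> \<Longrightarrow> C \<in> \<B> \<Longrightarrow> B \<inter> C \<in> \<B>"
  shows "\<exists>p\<in>omega_star. \<B> \<subseteq> p"
proof -
  let ?\<A> = "{F. infinite_filter F \<and> \<B> \<subseteq> F}"
  have "infinite_filter {C. \<exists>B\<in>\<B>. B \<subseteq> C}"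
    unfolding infinite_filter_def
  proof (intro conjI ballI allI impI)
    show "infinite A" if "A \<in> {C. \<exists>B\<in>\<B>. B \<subseteq> C}" for A
    proof -
      from that obtain B where "B \<in> \<B>" "B \<subseteq> A" by blast
      then show ?thesis using assms(2) finite_subset by blast
    qed
    show "A \<inter> C \<in> {C. \<exists>B\<in>\<B>. B \<subseteq> C}"
      if "A \<in> {C. \<exists>B\<in>\<B>. B \<subseteq> C}" "C \<in> {C. \<exists>B\<in>\<B>. B \<subseteq> C}" for A C
    proof -
      from that obtain B B' where "B \<in> \<B>" "B' \<in> \<B>" "B \<subseteq> A" "B' \<subseteq> C" by blast
      then show ?thesis using assms(3) by blast
    qed
  qed (use assms(1) in blast)+
  then have "?\<A> \<noteq> {}" by blast
  moreover have "\<Union>\<C> \<in> ?\<A>" if "\<C> \<noteq> {}" "subset.chain ?\<A> \<C>" for \<C>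
    using that infinite_filter_Union_chain[of \<C>] unfolding subset_chain_def by blast
  ultimately obtain M where "M \<in> ?\<A>" "\<forall>F\<in>?\<A>. M \<subseteq> F \<longrightarrow> F = M"
    using subset_Zorn_nonempty[of ?\<A>] by blast
  then show ?thesis using maximal_infinite_filter_omega_star[of M] by blast
qed

section \<open>Hyperspaces and pseudocompactness\<close>

lemma topspace_vietoris: "topspace (vietoris T) = CL T"
  unfolding vietoris_def
  by (auto simp: CL_def intro!: exI[of _ "topspace T"] dest: closedin_subset)

lemma openin_vietoris_subset: "openin T U \<Longrightarrow> openin (vietoris T) {F \<in> CL T. F \<subseteq> U}"
  unfolding vietoris_def openin_topology_generated_by_iff
  by (rule generate_topology_on.Basis) blast

lemma openin_vietoris_meets: "openin T U \<Longrightarrow> openin (vietoris T) {F \<in> CL T. F \<inter> U \<noteq> {}}"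
  unfolding vietoris_def openin_topology_generated_by_iff
  by (rule generate_topology_on.Basis) blast

lemma openin_vietoris_singleton:
  assumes F: "F \<in> CL T" "finite F" and isolated: "\<And>a. a \<in> F \<Longrightarrow> openin T {a}"
  shows "openin (vietoris T) {F}"
proof -
  have "openin T F"
    using openin_Union[of "(\<lambda>a. {a}) ` F"] isolated by auto
  then have "openin (vietoris T)
      ({H \<in> CL T. H \<subseteq> F} \<inter> ((\<Inter>a\<in>F. {H \<in> CL T. H \<inter> {a} \<noteq> {}}) \<inter> topspace (vietoris T)))"
    using F(2) isolated by (intro openin_Int openin_vietoris_subset openin_INT openin_vietoris_meets)
  moreover have "{H \<in> CL T. H \<subseteq> F} \<inter> ((\<Inter>a\<in>F. {H \<in> CL T. H \<inter> {a} \<noteq> {}}) \<inter> topspace (vietoris T)) = {F}"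
    using F(1) by (auto simp: topspace_vietoris)
  ultimately show ?thesis by simp
qed

lemma closedin_vietoris_singleton:
  assumes F: "F \<in> CL T" and closed: "\<And>a. a \<in> F \<Longrightarrow> closedin T {a}"
  shows "closedin (vietoris T) {F}"
  unfolding closedin_def
proof
  show "{F} \<subseteq> topspace (vietoris T)" using F by (simp add: topspace_vietoris)
  show "openin (vietoris T) (topspace (vietoris T) - {F})"
  proof (subst openin_subopen, intro ballI)
    fix H assume H: "H \<in> topspace (vietoris T) - {F}"
    then have "H \<in> CL T" "H \<noteq> F" by (auto simp: topspace_vietoris)
    then consider "\<not> H \<subseteq> F" | a where "a \<in> F" "a \<notin> H" by blast
    then show "\<exists>N. openin (vietoris T) N \<and> H \<in> N \<and> N \<subseteq> topspace (vietoris T) - {F}"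
    proof cases
      case 1
      have "openin T (topspace T - F)" using F by (simp add: CL_def closedin_def)
      moreover have "H \<inter> (topspace T - F) \<noteq> {}"
        using 1 \<open>H \<in> CL T\<close> by (auto simp: CL_def dest: closedin_subset)
      ultimately show ?thesis
        using \<open>H \<in> CL T\<close> openin_vietoris_meets[of T "topspace T - F"]
        by (intro exI[of _ "{G \<in> CL T. G \<inter> (topspace T - F) \<noteq> {}}"]) (auto simp: topspace_vietoris)
    next
      case 2
      have "openin T (topspace T - {a})" using closed[OF 2(1)] by (simp add: closedin_def)
      moreover have "H \<subseteq> topspace T - {a}"
        using 2 \<open>H \<in> CL T\<close> by (auto simp: CL_def dest: closedin_subset)
      ultimately show ?thesis
        using \<open>H \<in> CL T\<close> 2(1) openin_vietoris_subset[of T "topspace T - {a}"]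
        by (intro exI[of _ "{G \<in> CL T. G \<subseteq> topspace T - {a}}"]) (auto simp: topspace_vietoris)
    qed
  qed
qed

lemma continuous_map_locally_constant:
  assumes "f ` topspace T \<subseteq> topspace S"
    and "\<And>x. x \<in> topspace T \<Longrightarrow> \<exists>U. openin T U \<and> x \<in> U \<and> (\<forall>y\<in>U. f y = f x)"
  shows "continuous_map T S f"
  unfolding continuous_map_def
proof (intro conjI allI impI)
  show "f \<in> topspace T \<rightarrow> topspace S" using assms(1) by blast
  show "openin T {x \<in> topspace T. f x \<in> V}" for V
  proof (subst openin_subopen, intro ballI)
    fix x assume x: "x \<in> {x \<in> topspace T. f x \<in> V}"
    then obtain U where U: "openin T U" "x \<in> U" "\<forall>y\<in>U. f y = f x" using assms(2) by blast
    moreover have "U \<subseteq> {x \<in> topspace T. f x \<in> V}"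
      using openin_subset[OF U(1)] U(3) x by auto
    ultimately show "\<exists>U. openin T U \<and> x \<in> U \<and> U \<subseteq> {x \<in> topspace T. f x \<in> V}"
      by blast
  qed
qed

text \<open>Otherwise the function sending the n-th point to n and everything else to 0 would be
  locally constant, hence continuous and unbounded.\<close>
lemma pseudocompact_accumulation_point:
  fixes x :: "nat \<Rightarrow> 'a"
  assumes PC: "pseudocompact T" and "inj x"
    and isolated: "\<And>j. openin T {x j}" and closed: "\<And>j. closedin T {x j}"
  shows "\<exists>G\<in>topspace T. \<forall>N. openin T N \<and> G \<in> N \<longrightarrow> infinite {j. x j \<in> N}"
proof (rule ccontr)
  assume "\<not> ?thesis"
  then have fin: "\<exists>N. openin T N \<and> G \<in> N \<and> finite {j. x j \<in> N}" if "G \<in> topspace T" for G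
    using that by blast
  define f where "f y = (if y \<in> range x then real (inv x y) else 0)" for y
  have f_x: "f (x j) = real j" for j
    using \<open>inj x\<close> by (simp add: f_def)
  have "\<exists>U. openin T U \<and> G \<in> U \<and> (\<forall>y\<in>U. f y = f G)" if G: "G \<in> topspace T" for G
  proof (cases "G \<in> range x")
    case True
    then show ?thesis using isolated by blast
  next
    case False
    obtain N where N: "openin T N" "G \<in> N" "finite {j. x j \<in> N}" using fin[OF G] by blast
    let ?U = "N - (\<Union>j\<in>{j. x j \<in> N}. {x j})"
    have "openin T ?U"
      using N closed by (intro openin_diff closedin_Union) auto
    moreover have "?U \<inter> range x = {}" by blast
    ultimately show ?thesis
      using False N(2) by (intro exI[of _ ?U]) (auto simp: f_def)
  qed
  then have "continuous_map T euclideanreal f"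
    by (intro continuous_map_locally_constant) auto
  then obtain B where B: "\<And>y. y \<in> topspace T \<Longrightarrow> \<bar>f y\<bar> \<le> B"
    using PC unfolding pseudocompact_def bounded_real by blast
  have "x (nat \<lceil>B\<rceil> + 1) \<in> topspace T"
    using isolated openin_subset by blast
  from B[OF this] show False by (simp add: f_x) linarith
qed

definition uf_limit :: "'a topology \<Rightarrow> nat set set \<Rightarrow> (nat \<Rightarrow> 'a) \<Rightarrow> 'a \<Rightarrow> bool" where
  "uf_limit T P s x \<longleftrightarrow> x \<in> topspace T \<and> (\<forall>V. openin T V \<and> x \<in> V \<longrightarrow> {n. s n \<in> V} \<in> P)"

lemma uf_limit_product_topology:
  assumes P: "is_ultrafilter P" and s: "\<And>n. s n \<in> topspace (product_topology T K)"
    and x: "x \<in> extensional K" and lim: "\<And>k. k \<in> K \<Longrightarrow> uf_limit (T k) P (\<lambda>n. s n k) (x k)"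
  shows "uf_limit (product_topology T K) P s x"
  unfolding uf_limit_def
proof (intro conjI allI impI)
  show x_top: "x \<in> topspace (product_topology T K)"
    using x lim by (auto simp: uf_limit_def PiE_iff)
  fix W assume W: "openin (product_topology T K) W \<and> x \<in> W"
  then obtain U where U: "finite {i \<in> K. U i \<noteq> topspace (T i)}" "\<forall>i\<in>K. openin (T i) (U i)"
    "x \<in> Pi\<^sub>E K U" "Pi\<^sub>E K U \<subseteq> W"
    unfolding openin_product_topology_alt by blast
  define J where "J = {i \<in> K. U i \<noteq> topspace (T i)}"
  have "(\<Inter>i\<in>J. {n. s n i \<in> U i}) \<in> P"
    using P U(1) unfolding J_def
  proof (rule ultrafilter_INT)
    show "{n. s n i \<in> U i} \<in> P" if "i \<in> {i \<in> K. U i \<noteq> topspace (T i)}" for i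
      using that lim U(2,3) by (auto simp: uf_limit_def PiE_iff)
  qed
  moreover have "(\<Inter>i\<in>J. {n. s n i \<in> U i}) \<subseteq> {n. s n \<in> W}"
  proof
    fix n assume n: "n \<in> (\<Inter>i\<in>J. {n. s n i \<in> U i})"
    have "s n i \<in> U i" if "i \<in> K" for i
    proof (cases "i \<in> J")
      case True
      then show ?thesis using n by blast
    next
      case False
      then have "U i = topspace (T i)" using that by (simp add: J_def)
      then show ?thesis using s[of n] that by (simp add: PiE_iff)
    qed
    then have "s n \<in> Pi\<^sub>E K U" using s[of n] by (simp add: PiE_iff)
    then show "n \<in> {n. s n \<in> W}" using U(4) by blast
  qed
  ultimately show "{n. s n \<in> W} \<in> P" by (rule ultrafilter_mono[OF P])
qed

lemma uf_limit_in_derived_set: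
  assumes P: "P \<in> omega_star" and "inj s" and lim: "uf_limit T P s x"
  shows "x \<in> T derived_set_of (range s)"
  unfolding derived_set_of_def
proof (intro CollectI conjI allI impI)
  show "x \<in> topspace T" using lim by (simp add: uf_limit_def)
  fix W assume W: "x \<in> W \<and> openin T W"
  then have "infinite {n. s n \<in> W}"
    using lim omega_star_infinite[OF P] by (auto simp: uf_limit_def)
  moreover have "finite {n. s n = x}"
    using finite_vimageI[OF _ \<open>inj s\<close>, of "{x}"] by (simp add: vimage_def)
  ultimately have "infinite ({n. s n \<in> W} - {n. s n = x})" by (rule Diff_infinite_finite[rotated])
  then obtain n where "s n \<in> W" "s n \<noteq> x" using infinite_imp_nonempty by blast
  then show "\<exists>y. y \<noteq> x \<and> y \<in> range s \<and> y \<in> W" by blast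
qed

lemma p_limit_if_uf_limit:
  assumes P: "is_ultrafilter P" and "uf_limit T P s x" and "\<And>n. s n \<in> B n"
  shows "p_limit T P B x"
  unfolding p_limit_def
proof (intro conjI allI impI)
  show "x \<in> topspace T" using assms(2) by (simp add: uf_limit_def)
  fix V assume "openin T V \<and> x \<in> V"
  then have "{n. s n \<in> V} \<in> P" using assms(2) by (simp add: uf_limit_def)
  moreover have "{n. s n \<in> V} \<subseteq> {n. V \<inter> B n \<noteq> {}}" using assms(3) by blast
  ultimately show "{n. V \<inter> B n \<noteq> {}} \<in> P" by (rule ultrafilter_mono[OF P])
qed

section \<open>Tame sets\<close>

definition eventually_const_on :: "(nat \<Rightarrow> nat) \<Rightarrow> nat set \<Rightarrow> bool" where
  "eventually_const_on g A \<longleftrightarrow> (\<exists>c. finite {a \<in> A. g a \<noteq> c})"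

definition interlaced_on :: "(nat \<Rightarrow> nat) \<Rightarrow> nat set \<Rightarrow> bool" where
  "interlaced_on g A \<longleftrightarrow> (\<exists>N. \<forall>a\<in>A. \<forall>b\<in>A. N \<le> a \<longrightarrow> a < b \<longrightarrow> g a < b \<and> a \<le> g b)"

definition tame_sets :: "(nat \<Rightarrow> nat) \<Rightarrow> nat set set" where
  "tame_sets g = {A. infinite A \<and> (eventually_const_on g A \<or> interlaced_on g A)}"

lemma interlaced_subset_exists:
  assumes A: "infinite A" and fibres: "\<And>c. finite {a \<in> A. g a = c}"
  shows "\<exists>B\<subseteq>A. infinite B \<and> interlaced_on g B"
proof -
  have "\<exists>b. b \<in> A \<and> v < b \<and> g v < b \<and> v \<le> g b" for v
  proof -
    let ?E = "{a \<in> A. a \<le> max v (g v)} \<union> (\<Union>c<v. {a \<in> A. g a = c})"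
    have "finite {a \<in> A. a \<le> max v (g v)}"
      by (rule finite_subset[of _ "{..max v (g v)}"]) auto
    moreover have "finite (\<Union>c<v. {a \<in> A. g a = c})"
      using fibres by (intro finite_UN_I) auto
    ultimately have "infinite (A - ?E)" using Diff_infinite_finite A by blast
    then obtain b where b: "b \<in> A" "b \<notin> ?E" using infinite_imp_nonempty by blast
    then have "max v (g v) < b" "\<not> g b < v" by auto
    then show ?thesis using b(1) by auto
  qed
  then obtain s where s: "\<And>n. s n \<in> A"
    and step: "\<And>n. s n < s (Suc n) \<and> g (s n) < s (Suc n) \<and> s n \<le> g (s (Suc n))"
    using dependent_nat_choice[of "\<lambda>_ b. b \<in> A" "\<lambda>_ v b. v < b \<and> g v < b \<and> v \<le> g b"]
      infinite_imp_nonempty[OF A] by blast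
  have mono: "strict_mono s"
    using step by (simp add: strict_mono_Suc_iff)
  have "g (s i) < s j \<and> s i \<le> g (s j)" if "i < j" for i j
  proof -
    obtain j' where j': "j = Suc j'" "i \<le> j'" using \<open>i < j\<close> by (cases j) auto
    have "s (Suc i) \<le> s j" "s i \<le> s j'"
      using mono j' \<open>i < j\<close> by (simp_all add: strict_mono_less_eq)
    then show ?thesis using step[of i] step[of j'] unfolding j'(1) by linarith
  qed
  then have "interlaced_on g (range s)"
    unfolding interlaced_on_def by (metis rangeE mono strict_mono_less)
  moreover have "infinite (range s)"
    using strict_mono_imp_inj_on[OF mono] by (simp add: finite_image_iff)
  ultimately show ?thesis using s by blast
qed

lemma tame_sets_dense:
  assumes "infinite A"
  shows "\<exists>B\<in>tame_sets g. B \<subseteq> A"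
proof (cases "\<exists>c. infinite {a \<in> A. g a = c}")
  case True
  then obtain c where c: "infinite {a \<in> A. g a = c}" by blast
  have "eventually_const_on g {a \<in> A. g a = c}"
    unfolding eventually_const_on_def by (intro exI[of _ c]) simp
  then have "{a \<in> A. g a = c} \<in> tame_sets g" using c by (simp add: tame_sets_def)
  then show ?thesis by (intro bexI[of _ "{a \<in> A. g a = c}"]) auto
next
  case False
  then have "\<And>c. finite {a \<in> A. g a = c}" by blast
  with interlaced_subset_exists[OF assms] obtain B
    where "B \<subseteq> A" "infinite B" "interlaced_on g B" by blast
  then have "B \<in> tame_sets g" by (simp add: tame_sets_def)
  then show ?thesis using \<open>B \<subseteq> A\<close> by blast
qed

lemma ufmap_comp_eventually_const_on:
  assumes P: "P \<in> omega_star" and "inj c" "range c \<subseteq> A" and "eventually_const_on g A"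
  shows "\<exists>v. ufmap (g \<circ> c) P = principal_uf v"
proof -
  obtain v where "finite {a \<in> A. g a \<noteq> v}"
    using assms(4) by (auto simp: eventually_const_on_def)
  then have "finite (c -` {a \<in> A. g a \<noteq> v})" using \<open>inj c\<close> by (rule finite_vimageI)
  moreover have "{j. (g \<circ> c) j \<noteq> v} \<subseteq> c -` {a \<in> A. g a \<noteq> v}"
    using assms(3) by auto
  ultimately have "finite {j. (g \<circ> c) j \<noteq> v}" by (simp add: finite_subset)
  then have "ufmap (g \<circ> c) P = principal_uf v" by (rule ufmap_eventually_const[OF P])
  then show ?thesis by blast
qed

lemma eventually_const_on_almost_superset:
  assumes "eventually_const_on g B" "finite (C - B)"
  shows "eventually_const_on g C"
proof -
  obtain c where "finite {a \<in> B. g a \<noteq> c}"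
    using assms(1) unfolding eventually_const_on_def by blast
  then have "finite ((C - B) \<union> {a \<in> B. g a \<noteq> c})" using assms(2) by simp
  then have "finite {a \<in> C. g a \<noteq> c}" by (rule finite_subset[rotated]) blast
  then show ?thesis unfolding eventually_const_on_def by blast
qed

lemma interlaced_on_almost_superset:
  assumes "interlaced_on g B" "finite (C - B)"
  shows "interlaced_on g C"
proof -
  obtain N where N: "\<forall>a\<in>B. \<forall>b\<in>B. N \<le> a \<longrightarrow> a < b \<longrightarrow> g a < b \<and> a \<le> g b"
    using assms(1) unfolding interlaced_on_def by blast
  obtain M where M: "\<forall>a\<in>C - B. a < M" using assms(2) finite_nat_bounded by blast
  have "g a < b \<and> a \<le> g b" if "a \<in> C" "b \<in> C" "max N M \<le> a" "a < b" for a b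
  proof -
    have "\<not> a < M" "\<not> b < M" using that by auto
    then have "a \<in> B" "b \<in> B" using M that by blast+
    then show ?thesis using N that by simp
  qed
  then show ?thesis unfolding interlaced_on_def by blast
qed

lemma open_dense_tame_sets: "open_dense (tame_sets g)"
  unfolding open_dense_def
proof (intro conjI allI ballI impI)
  show "infinite B" if "B \<in> tame_sets g" for B
    using that by (simp add: tame_sets_def)
  show "\<exists>B\<in>tame_sets g. B \<subseteq> A" if "infinite A" for A
    using that by (rule tame_sets_dense)
  show "C \<in> tame_sets g" if "B \<in> tame_sets g \<and> infinite C \<and> finite (C - B)" for B C
    using that eventually_const_on_almost_superset[of g B C] interlaced_on_almost_superset[of g B C]
    unfolding tame_sets_def by blast
qed

lemma less_than_h_common_tame_set:
  fixes f :: "'k \<Rightarrow> nat \<Rightarrow> nat"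
  assumes "less_than_h K"
  shows "\<exists>A. infinite A \<and> (\<forall>k\<in>K. A \<in> tame_sets (f k))"
proof -
  have "(card_of ((\<lambda>k. tame_sets (f k)) ` K), card_of K) \<in> ordLeq"
    by (rule card_of_image)
  moreover have "\<forall>D\<in>(\<lambda>k. tame_sets (f k)) ` K. open_dense D"
    using open_dense_tame_sets by blast
  ultimately obtain A where "infinite A" "\<forall>D\<in>(\<lambda>k. tame_sets (f k)) ` K. A \<in> D"
    using assms unfolding less_than_h_def by blast
  then show ?thesis by blast
qed

definition block :: "(nat \<Rightarrow> nat) \<Rightarrow> nat \<Rightarrow> nat set" where
  "block e j = {if j = 0 then 0 else e (2 * j - 1) ..< e (2 * j + 1)}"

lemma finite_block: "finite (block e j)"
  by (simp add: block_def)

lemma block_even_mem: "strict_mono e \<Longrightarrow> e (2 * j) \<in> block e j"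
  by (auto simp: block_def strict_mono_less less_imp_le)

lemma disjoint_family_block:
  assumes "strict_mono e"
  shows "disjoint_family (block e)"
proof -
  have "block e i \<inter> block e j = {}" if "i < j" for i j
  proof -
    have "e (2 * i + 1) \<le> e (2 * j - 1)"
      using that assms by (simp add: strict_mono_less_eq)
    then show ?thesis using that by (auto simp: block_def)
  qed
  then show ?thesis
    unfolding disjoint_family_on_def by (metis Int_commute linorder_neqE_nat)
qed

lemma interlaced_in_block:
  assumes e: "strict_mono e"
    and N: "\<forall>a\<in>range e. \<forall>b\<in>range e. N \<le> a \<longrightarrow> a < b \<longrightarrow> g a < b \<and> a \<le> g b"
    and "N < j"
  shows "g (e (2 * j)) \<in> block e j"
proof -
  have "N \<le> e (2 * j - 1)" "N \<le> e (2 * j)"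
    using assms(3) strict_mono_imp_increasing[OF e, of "2 * j - 1"]
      strict_mono_imp_increasing[OF e, of "2 * j"] by linarith+
  moreover have "e (2 * j - 1) < e (2 * j)" "e (2 * j) < e (2 * j + 1)"
    using assms(3) e by (simp_all add: strict_mono_less)
  ultimately have "e (2 * j - 1) \<le> g (e (2 * j))" "g (e (2 * j)) < e (2 * j + 1)"
    using N by blast+
  then show ?thesis using assms(3) by (simp add: block_def)
qed

section \<open>The Stone topology and subspaces containing \<omega>\<close>

definition basic_open :: "nat set \<Rightarrow> nat set set set" where
  "basic_open A = {U \<in> betaw. A \<in> U}"

lemma betaw_top_basic_open: "betaw_top = topology_generated_by (range basic_open)"
  unfolding betaw_top_def basic_open_def by (simp add: full_SetCompr_eq)

lemma topspace_betaw_top: "topspace betaw_top = betaw"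
  unfolding betaw_top_basic_open
  by (auto simp: basic_open_def betaw_def intro!: ultrafilter_UNIV)

lemma openin_basic_open: "openin betaw_top (basic_open A)"
  unfolding betaw_top_basic_open openin_topology_generated_by_iff
  by (rule generate_topology_on.Basis) simp

lemma basic_open_Int: "basic_open (A \<inter> B) = basic_open A \<inter> basic_open B"
  unfolding basic_open_def betaw_def
  by (auto intro: ultrafilter_Int elim: ultrafilter_mono)

lemma betaw_top_basis:
  assumes "openin betaw_top W" "q \<in> W"
  shows "\<exists>A\<in>q. basic_open A \<subseteq> W"
proof -
  have "q \<in> betaw" using assms openin_subset topspace_betaw_top by blast
  have "generate_topology_on (range basic_open) W"
    using assms(1) by (simp add: betaw_top_basic_open openin_topology_generated_by_iff)
  then show ?thesis
    using assms(2)
  proof (induction)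
    case (Int a b)
    then obtain A B where "A \<in> q" "B \<in> q" "basic_open A \<subseteq> a" "basic_open B \<subseteq> b" by blast
    then show ?case
      using \<open>q \<in> betaw\<close> ultrafilter_Int[of q A B] basic_open_Int[of A B]
      by (intro bexI[of _ "A \<inter> B"]) (auto simp: betaw_def)
  next
    case (Basis s)
    then show ?case using \<open>q \<in> betaw\<close> by (auto simp: basic_open_def)
  next
    case (UN K)
    then show ?case by blast
  qed auto
qed

locale omega_subspace =
  fixes X :: "nat set set set"
  assumes X_betaw: "X \<subseteq> betaw" and principal_in_X: "range principal_uf \<subseteq> X"
begin

abbreviation TX :: "nat set set topology" where
  "TX \<equiv> subtopology betaw_top X"

lemma topspace_TX: "topspace TX = X"
  using X_betaw by (simp add: topspace_betaw_top Int_absorb1)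

lemma openin_TX_basic_open: "openin TX (basic_open A \<inter> X)"
  using openin_basic_open by (auto simp: openin_subtopology)

lemma basic_open_finite:
  assumes "finite E"
  shows "basic_open E \<inter> X = principal_uf ` E"
proof
  show "basic_open E \<inter> X \<subseteq> principal_uf ` E"
    using ultrafilter_finite_principal[OF _ assms] by (auto simp: basic_open_def betaw_def)
  show "principal_uf ` E \<subseteq> basic_open E \<inter> X"
    using principal_in_X principal_uf_in_betaw by (auto simp: basic_open_def principal_uf_def)
qed

lemma openin_TX_principal: "openin TX {principal_uf n}"
  using openin_TX_basic_open[of "{n}"] basic_open_finite[of "{n}"] by simp

lemma closedin_TX_principal: "closedin TX {principal_uf n}"
proof -
  have "U = principal_uf n \<longleftrightarrow> - {n} \<notin> U" if "U \<in> X" for U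
  proof -
    have "is_ultrafilter U" using that X_betaw by (auto simp: betaw_def)
    then have "- {n} \<notin> U \<longleftrightarrow> U \<in> basic_open {n} \<inter> X"
      using that X_betaw by (auto simp: basic_open_def ultrafilter_Compl_iff)
    then show ?thesis using basic_open_finite[of "{n}"] by simp
  qed
  then have "X - {principal_uf n} = basic_open (- {n}) \<inter> X"
    using X_betaw by (auto simp: basic_open_def)
  then show ?thesis
    unfolding closedin_def topspace_TX using openin_TX_basic_open principal_in_X by auto
qed

lemma principal_image_CL:
  assumes "finite E" "E \<noteq> {}"
  shows "principal_uf ` E \<in> CL TX"
proof -
  have "closedin TX (\<Union>n\<in>E. {principal_uf n})"
    using assms(1) closedin_TX_principal by (intro closedin_Union) auto
  then show ?thesis using assms(2) by (simp add: CL_def UNION_singleton_eq_range)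
qed

lemma CL_TX_subset: "H \<in> CL TX \<Longrightarrow> H \<subseteq> X"
  using closedin_subset[of TX H] unfolding CL_def topspace_TX by blast

lemma principal_dense: "openin TX V \<Longrightarrow> V \<noteq> {} \<Longrightarrow> \<exists>m. principal_uf m \<in> V"
proof -
  assume "openin TX V" "V \<noteq> {}"
  then obtain W q where W: "openin betaw_top W" "V = W \<inter> X" and "q \<in> V"
    by (auto simp: openin_subtopology)
  then obtain A where A: "A \<in> q" "basic_open A \<subseteq> W"
    using betaw_top_basis by blast
  have "A \<noteq> {}" using A(1) \<open>q \<in> V\<close> W(2) X_betaw ultrafilter_empty by (auto simp: betaw_def)
  then obtain m where "m \<in> A" by blast
  then have "principal_uf m \<in> basic_open A"
    by (simp add: basic_open_def principal_uf_in_betaw) (simp add: principal_uf_def)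
  then show ?thesis using A(2) W(2) principal_in_X by blast
qed

lemma uf_limit_principal:
  assumes P: "is_ultrafilter P" and "ufmap g P \<in> X"
  shows "uf_limit TX P (\<lambda>n. principal_uf (g n)) (ufmap g P)"
  unfolding uf_limit_def topspace_TX
proof (intro conjI allI impI)
  fix V assume V: "openin TX V \<and> ufmap g P \<in> V"
  then obtain W where W: "openin betaw_top W" "V = W \<inter> X"
    by (auto simp: openin_subtopology)
  then obtain A where A: "A \<in> ufmap g P" "basic_open A \<subseteq> W"
    using V betaw_top_basis by blast
  have "principal_uf (g n) \<in> basic_open A" if "g n \<in> A" for n
    using that by (simp add: basic_open_def principal_uf_in_betaw) (simp add: principal_uf_def)
  then have "g -` A \<subseteq> {n. principal_uf (g n) \<in> V}"
    using A(2) W(2) principal_in_X by blast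
  then show "{n. principal_uf (g n) \<in> V} \<in> P"
    using A(1) ultrafilter_mono[OF P] by (auto simp: ufmap_def)
qed (use assms(2) in simp)

lemma ufmap_selection_mem:
  assumes G: "G \<in> CL TX" and p: "is_ultrafilter p"
    and conv: "\<And>N. openin (vietoris TX) N \<Longrightarrow> G \<in> N \<Longrightarrow> {j. principal_uf ` F j \<in> N} \<in> p"
    and sel: "\<And>j. \<sigma> j \<in> F j" and disj: "disjoint_family F"
  shows "ufmap \<sigma> p \<in> G"
proof -
  have GX: "G \<subseteq> X" using CL_TX_subset[OF G] .
  then have G_uf: "is_ultrafilter y" if "y \<in> G" for y
    using that X_betaw by (auto simp: betaw_def)
  have "\<exists>y\<in>G. range \<sigma> \<in> y"
  proof (rule ccontr)
    assume "\<not> ?thesis"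
    then have "G \<subseteq> basic_open (- range \<sigma>) \<inter> X"
      using GX G_uf X_betaw ultrafilter_Compl_iff by (auto simp: basic_open_def)
    then have "{j. principal_uf ` F j \<in> {H \<in> CL TX. H \<subseteq> basic_open (- range \<sigma>) \<inter> X}} \<in> p"
      using G by (intro conv openin_vietoris_subset openin_TX_basic_open) auto
    then obtain j where "principal_uf ` F j \<subseteq> basic_open (- range \<sigma>)"
      using ultrafilter_empty[OF p] by fastforce
    then have "- range \<sigma> \<in> principal_uf (\<sigma> j)"
      using sel by (auto simp: basic_open_def)
    then show False by (simp add: principal_uf_def)
  qed
  then obtain y where y: "y \<in> G" "range \<sigma> \<in> y" by blast
  have "y \<subseteq> ufmap \<sigma> p"
  proof
    fix D assume "D \<in> y"
    let ?N = "{H \<in> CL TX. H \<inter> (basic_open (D \<inter> range \<sigma>) \<inter> X) \<noteq> {}}"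
    have "y \<in> basic_open (D \<inter> range \<sigma>) \<inter> X"
      using y \<open>D \<in> y\<close> GX X_betaw G_uf ultrafilter_Int by (auto simp: basic_open_def)
    then have "{j. principal_uf ` F j \<in> ?N} \<in> p"
      using G y(1) by (intro conv openin_vietoris_meets openin_TX_basic_open) auto
    moreover have "{j. principal_uf ` F j \<in> ?N} \<subseteq> \<sigma> -` D"
    proof
      fix j assume "j \<in> {j. principal_uf ` F j \<in> ?N}"
      then obtain a where "a \<in> F j" "D \<inter> range \<sigma> \<in> principal_uf a"
        by (auto simp: basic_open_def)
      then obtain i where "a \<in> F j" "a \<in> D" "a = \<sigma> i"
        by (auto simp: principal_uf_def)
      moreover have "i = j"
        using calculation sel[of i] disj by (auto simp: disjoint_family_on_def)
      ultimately show "j \<in> \<sigma> -` D" by simp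
    qed
    ultimately show "D \<in> ufmap \<sigma> p"
      using ultrafilter_mono[OF p] by (auto simp: ufmap_def)
  qed
  then have "y = ufmap \<sigma> p"
    by (intro ultrafilter_eqI G_uf[OF y(1)] ultrafilter_ufmap[OF p])
  then show ?thesis using y(1) by simp
qed

lemma selection_ufmap_in_X:
  assumes PC: "pseudocompact (vietoris TX)"
    and F: "\<And>j. finite (F j)" "\<And>j. F j \<noteq> {}" and disj: "disjoint_family F"
  shows "\<exists>p\<in>omega_star. \<forall>\<sigma>. (\<forall>j. \<sigma> j \<in> F j) \<longrightarrow> ufmap \<sigma> p \<in> X"
proof -
  define x where "x j = principal_uf ` F j" for j
  have "inj x"
  proof (rule injI)
    fix i j assume "x i = x j"
    obtain a where "a \<in> F i" using F(2) by blast
    then have "a \<in> F j"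
      using \<open>x i = x j\<close> unfolding x_def by (metis imageE imageI principal_uf_inject)
    then show "i = j"
      using \<open>a \<in> F i\<close> disj by (auto simp: disjoint_family_on_def)
  qed
  moreover have "x j \<in> CL TX" for j
    unfolding x_def using F by (rule principal_image_CL)
  then have "openin (vietoris TX) {x j}" "closedin (vietoris TX) {x j}" for j
    using F(1) openin_TX_principal closedin_TX_principal unfolding x_def
    by (auto intro!: openin_vietoris_singleton closedin_vietoris_singleton)
  ultimately obtain G where G: "G \<in> CL TX"
    and acc: "\<And>N. openin (vietoris TX) N \<Longrightarrow> G \<in> N \<Longrightarrow> infinite {j. x j \<in> N}"
    using pseudocompact_accumulation_point[OF PC] by (metis topspace_vietoris)
  define \<B> where "\<B> = {{j. x j \<in> N} | N. openin (vietoris TX) N \<and> G \<in> N}"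
  have "\<B> \<noteq> {}"
    using G unfolding \<B>_def by (auto intro!: exI[of _ "topspace (vietoris TX)"] simp: topspace_vietoris)
  moreover have "B \<inter> C \<in> \<B>" if "B \<in> \<B>" "C \<in> \<B>" for B C
  proof -
    from that obtain N M where "openin (vietoris TX) N" "G \<in> N" "B = {j. x j \<in> N}"
      "openin (vietoris TX) M" "G \<in> M" "C = {j. x j \<in> M}" unfolding \<B>_def by blast
    then show ?thesis unfolding \<B>_def by (intro CollectI exI[of _ "N \<inter> M"]) auto
  qed
  ultimately obtain p where p: "p \<in> omega_star" "\<B> \<subseteq> p"
    using omega_star_extends[of \<B>] acc unfolding \<B>_def by blast
  have "ufmap \<sigma> p \<in> X" if "\<forall>j. \<sigma> j \<in> F j" for \<sigma>
  proof -
    have "{j. principal_uf ` F j \<in> N} \<in> p" if "openin (vietoris TX) N" "G \<in> N" for N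
      using p(2) that unfolding \<B>_def x_def by blast
    then have "ufmap \<sigma> p \<in> G"
      using that by (intro ufmap_selection_mem[OF G omega_star_ultrafilter[OF p(1)] _ _ disj]) auto
    then show ?thesis using CL_TX_subset[OF G] by blast
  qed
  then show ?thesis using p(1) by blast
qed

lemma tame_ufmap_in_X:
  assumes PC: "pseudocompact (vietoris TX)" and A: "infinite A"
  shows "\<exists>P\<in>omega_star. \<forall>g. A \<in> tame_sets g \<longrightarrow> ufmap g P \<in> X"
proof -
  define e where "e = enumerate A"
  have e: "strict_mono e" "range e \<subseteq> A"
    unfolding strict_mono_def e_def using enumerate_mono[OF _ A] enumerate_in_set[OF A] by blast+
  have "block e j \<noteq> {}" for j using block_even_mem[OF e(1)] by blast
  then obtain p where p: "p \<in> omega_star"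
    and sel: "\<forall>\<sigma>. (\<forall>j. \<sigma> j \<in> block e j) \<longrightarrow> ufmap \<sigma> p \<in> X"
    using selection_ufmap_in_X[OF PC finite_block _ disjoint_family_block[OF e(1)]] by blast
  define c where "c j = e (2 * j)" for j
  have "inj c"
    unfolding c_def inj_def using strict_mono_eq[OF e(1)] by simp
  define P where "P = ufmap c p"
  have "ufmap g P \<in> X" if "A \<in> tame_sets g" for g
  proof -
    have eq: "ufmap g P = ufmap (g \<circ> c) p" by (simp add: P_def ufmap_comp)
    from that consider "eventually_const_on g A" | "interlaced_on g A"
      by (auto simp: tame_sets_def)
    then show ?thesis
    proof cases
      case 1
      then obtain v where "ufmap (g \<circ> c) p = principal_uf v"
        using ufmap_comp_eventually_const_on[OF p \<open>inj c\<close>] e(2) unfolding c_def by blast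
      then show ?thesis using eq principal_in_X by auto
    next
      case 2
      then obtain N where "\<forall>a\<in>A. \<forall>b\<in>A. N \<le> a \<longrightarrow> a < b \<longrightarrow> g a < b \<and> a \<le> g b"
        by (auto simp: interlaced_on_def)
      then have N: "\<forall>a\<in>range e. \<forall>b\<in>range e. N \<le> a \<longrightarrow> a < b \<longrightarrow> g a < b \<and> a \<le> g b"
        using e(2) by blast
      define \<sigma> where "\<sigma> j = (if N < j then g (c j) else c j)" for j
      have "ufmap \<sigma> p \<in> X"
        using interlaced_in_block[OF e(1) N] block_even_mem[OF e(1)]
        using sel by (simp add: \<sigma>_def c_def)
      have "- {..N} \<subseteq> {j. \<sigma> j = (g \<circ> c) j}" by (auto simp: \<sigma>_def)
      then have "{j. \<sigma> j = (g \<circ> c) j} \<in> p"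
        using omega_star_cofinite[OF p, of "{..N}"] ultrafilter_mono[OF omega_star_ultrafilter[OF p]]
        by simp
      then have "ufmap \<sigma> p = ufmap (g \<circ> c) p"
        using omega_star_ultrafilter[OF p] by (intro ufmap_cong)
      then show ?thesis using eq \<open>ufmap \<sigma> p \<in> X\<close> by simp
    qed
  qed
  moreover have "P \<in> omega_star" unfolding P_def using p \<open>inj c\<close> by (rule ufmap_omega_star)
  ultimately show ?thesis by blast
qed

lemma ufmaps_in_X:
  fixes f :: "'k \<Rightarrow> nat \<Rightarrow> nat"
  assumes "pseudocompact (vietoris TX)" "less_than_h K"
  shows "\<exists>P\<in>omega_star. \<forall>k\<in>K. ufmap (f k) P \<in> X"
proof -
  obtain A where "infinite A" "\<forall>k\<in>K. A \<in> tame_sets (f k)"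
    using less_than_h_common_tame_set[OF assms(2)] by blast
  with tame_ufmap_in_X[OF assms(1)] show ?thesis by blast
qed

lemma rel_countably_compact_principal_power:
  assumes PC: "pseudocompact (vietoris TX)" and LH: "less_than_h K"
  shows "rel_countably_compact (product_topology (\<lambda>k. TX) K) (PiE K (\<lambda>k. range principal_uf))"
  unfolding rel_countably_compact_def
proof (intro conjI allI impI)
  show sub: "PiE K (\<lambda>k. range principal_uf) \<subseteq> topspace (product_topology (\<lambda>k. TX) K)"
    unfolding topspace_product_topology topspace_TX using principal_in_X by (auto simp: PiE_iff)
  fix S assume S: "S \<subseteq> PiE K (\<lambda>k. range principal_uf) \<and> infinite S \<and> countable S"
  then obtain s where s: "bij_betw s (UNIV :: nat set) S" using countable_infiniteE' by blast
  then have s_mem: "s n \<in> PiE K (\<lambda>k. range principal_uf)" for n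
    using S bij_betwE by blast
  define f where "f k n = inv principal_uf (s n k)" for k n
  have s_eq: "s n k = principal_uf (f k n)" if "k \<in> K" for k n
    using s_mem[of n] that by (auto simp: f_def PiE_iff f_inv_into_f)
  obtain P where P: "P \<in> omega_star" "\<forall>k\<in>K. ufmap (f k) P \<in> X"
    using ufmaps_in_X[OF PC LH] by blast
  define x where "x = restrict (\<lambda>k. ufmap (f k) P) K"
  have "uf_limit (product_topology (\<lambda>k. TX) K) P s x"
  proof (rule uf_limit_product_topology[OF omega_star_ultrafilter[OF P(1)]])
    show "s n \<in> topspace (product_topology (\<lambda>k. TX) K)" for n using s_mem sub by blast
    show "x \<in> extensional K" by (simp add: x_def)
    show "uf_limit TX P (\<lambda>n. s n k) (x k)" if "k \<in> K" for k
      using uf_limit_principal[OF omega_star_ultrafilter[OF P(1)]] P(2) that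
      by (simp add: x_def s_eq)
  qed
  with P(1) bij_betw_imp_inj_on[OF s]
  have "x \<in> product_topology (\<lambda>k. TX) K derived_set_of range s"
    by (rule uf_limit_in_derived_set)
  then show "product_topology (\<lambda>k. TX) K derived_set_of S \<noteq> {}"
    using bij_betw_imp_surj_on[OF s] by auto
qed

lemma kappa_omega_star_pseudocompact_TX:
  fixes K :: "'k set"
  assumes PC: "pseudocompact (vietoris TX)" and LH: "less_than_h K"
  shows "kappa_omega_star_pseudocompact K TX"
  unfolding kappa_omega_star_pseudocompact_def
proof (intro allI impI)
  fix U :: "'k \<Rightarrow> nat \<Rightarrow> nat set set set"
  assume U: "\<forall>k\<in>K. \<forall>n. openin TX (U k n) \<and> U k n \<noteq> {}"
  define f where "f k n = (SOME m. principal_uf m \<in> U k n)" for k n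
  have f: "principal_uf (f k n) \<in> U k n" if "k \<in> K" for k n
    unfolding f_def using principal_dense U that by (metis someI_ex)
  obtain P where P: "P \<in> omega_star" "\<forall>k\<in>K. ufmap (f k) P \<in> X"
    using ufmaps_in_X[OF PC LH] by blast
  have "p_limit TX P (U k) (ufmap (f k) P)" if "k \<in> K" for k
    using omega_star_ultrafilter[OF P(1)] uf_limit_principal[OF omega_star_ultrafilter[OF P(1)]]
      P(2) f that by (intro p_limit_if_uf_limit) auto
  then show "\<exists>p\<in>omega_star. \<forall>k\<in>K. \<exists>x. p_limit TX p (U k) x" using P(1) by blast
qed

end

theorem theorem4p1:
  fixes X :: "nat set set set" and K :: "'k set"
  assumes "X \<subseteq> betaw"
    and "range principal_uf \<subseteq> X"
    and "pseudocompact (vietoris (subtopology betaw_top X))"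
    and "less_than_h K"
  shows "rel_countably_compact (product_topology (\<lambda>k. subtopology betaw_top X) K)
           (PiE K (\<lambda>k. range principal_uf))
       \<and> kappa_omega_star_pseudocompact K (subtopology betaw_top X)"
proof -
  interpret omega_subspace X using assms(1,2) by unfold_locales
  show ?thesis
    using rel_countably_compact_principal_power[OF assms(3,4)]
      kappa_omega_star_pseudocompact_TX[OF assms(3,4)] by blast
qed

end
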